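(* Let $x_0\in\mathbb{R}\cup\{+\infty\}$, $T<x_0$, $I:=[T,x_0)$, and let $\phi_1,\phi_2\in C^1(I)$ satisfy $\phi_2(x)=o(\phi_1(x))$ as $x\to x_0$, $\phi_1(x)>0$ and $\phi_2(x)\neq0$ for all $x\in I$, and $W(\phi_1,\phi_2;x)>0$ for all $x\in I$. Define on $I$ $$\overline\psi_1:=\phi_1,\quad \overline\psi_2(x):=\phi_1(x)\int_T^x\Big(\frac{\phi_2(t)}{\phi_1(t)}\Big)'dt;\qquad \overline{\overline\psi}_1:=|\phi_2|,\quad \overline{\overline\psi}_2(x):=-|\phi_2(x)|\int_T^x\Big(\frac{\phi_1(t)}{\phi_2(t)}\Big)'dt.$$ Then each of the pairs $(\overline\psi_1,\overline\psi_2)$ and $(\overline{\overline\psi}_1,\overline{\overline\psi}_2)$ consists of $C^1(I)$ functions with positive first component and positive Wronskian on $I$, and $$f\in\mathcal{C}(\phi_1,\phi_2;I)\iff f\in\mathcal{C}(\overline\psi_1,\overline\psi_2;I)\iff f\in\mathcal{C}(\overline{\overline\psi}_1,\overline{\overline\psi}_2;I).$$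
   Context: $W(g,h;x):=g(x)h'(x)-g'(x)h(x)$. For continuous $\psi_1,\psi_2$ on an interval $J$, $f:J\to\mathbb{R}$ belongs to $\mathcal{C}(\psi_1,\psi_2;J)$ iff for all $t_1<t_2<t_3$ in $J$ $$\det\begin{pmatrix}\psi_1(t_1)&\psi_1(t_2)&\psi_1(t_3)\\ \psi_2(t_1)&\psi_2(t_2)&\psi_2(t_3)\\ f(t_1)&f(t_2)&f(t_3)\end{pmatrix}\ge0.$$ *)

theory Defs
  imports "HOL-Analysis.Analysis" "HOL-Library.Landau_Symbols"
begin

definition half_open_ivl :: "real \<Rightarrow> ereal \<Rightarrow> real set" where
  "half_open_ivl T x0 = {x. T \<le> x \<and> ereal x < x0}"

definition to_x0 :: "ereal \<Rightarrow> real filter" where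
  "to_x0 x0 = (if x0 = \<infinity> then at_top else at_left (real_of_ereal x0))"

definition C1_with_deriv :: "real set \<Rightarrow> (real \<Rightarrow> real) \<Rightarrow> (real \<Rightarrow> real) \<Rightarrow> bool" where
  "C1_with_deriv J f f' \<longleftrightarrow>
     (\<forall>x\<in>J. (f has_real_derivative f' x) (at x within J)) \<and> continuous_on J f'"

definition wronskian :: "(real \<Rightarrow> real) \<Rightarrow> (real \<Rightarrow> real) \<Rightarrow> (real \<Rightarrow> real) \<Rightarrow> (real \<Rightarrow> real) \<Rightarrow> real \<Rightarrow> real" where
  "wronskian g h g' h' x = g x * h' x - g' x * h x"

definition classC :: "(real \<Rightarrow> real) \<Rightarrow> (real \<Rightarrow> real) \<Rightarrow> real set \<Rightarrow> (real \<Rightarrow> real) \<Rightarrow> bool" where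
  "classC \<psi>1 \<psi>2 J f \<longleftrightarrow>
     (\<forall>t1\<in>J. \<forall>t2\<in>J. \<forall>t3\<in>J. t1 < t2 \<and> t2 < t3 \<longrightarrow>
        det (vector [vector [\<psi>1 t1, \<psi>1 t2, \<psi>1 t3],
                     vector [\<psi>2 t1, \<psi>2 t2, \<psi>2 t3],
                     vector [f t1, f t2, f t3]] :: real^3^3) \<ge> 0)"

end

theory Submission
  imports Defs
begin

text \<open>By the fundamental theorem of calculus, on \<open>I\<close> one has
  \<open>\<overline>\<psi>\<^sub>2 = \<phi>\<^sub>2 - c \<phi>\<^sub>1\<close> with \<open>c = \<phi>\<^sub>2(T)/\<phi>\<^sub>1(T)\<close>, and, writing
  \<open>\<sigma> \<in> {1, -1}\<close> for the constant sign of \<open>\<phi>\<^sub>2\<close>, \<open>\<overline>\<overline>\<psi>\<^sub>1 = \<sigma> \<phi>\<^sub>2\<close> and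
  \<open>\<overline>\<overline>\<psi>\<^sub>2 = \<sigma> (e \<phi>\<^sub>2 - \<phi>\<^sub>1)\<close> with \<open>e = \<phi>\<^sub>1(T)/\<phi>\<^sub>2(T)\<close>.  So both new pairs arise
  from \<open>(\<phi>\<^sub>1, \<phi>\<^sub>2)\<close> by a constant matrix of determinant 1.  Such a change of basis
  multiplies every Wronskian and every determinant defining the class \<open>\<C>\<close> by that
  determinant, so it leaves them unchanged.\<close>

definition unimodular_combination ::
    "real set \<Rightarrow> (real \<Rightarrow> real) \<Rightarrow> (real \<Rightarrow> real) \<Rightarrow> (real \<Rightarrow> real) \<Rightarrow> (real \<Rightarrow> real) \<Rightarrow> bool" where
  "unimodular_combination J p1 p2 q1 q2 \<longleftrightarrow>
     (\<exists>a b c d. a * d - b * c = 1 \<and>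
        (\<forall>t\<in>J. q1 t = a * p1 t + b * p2 t \<and> q2 t = c * p1 t + d * p2 t))"

lemma unimodular_combinationI:
  assumes "a * d - b * c = 1"
    and "\<And>t. t \<in> J \<Longrightarrow> q1 t = a * p1 t + b * p2 t"
    and "\<And>t. t \<in> J \<Longrightarrow> q2 t = c * p1 t + d * p2 t"
  shows "unimodular_combination J p1 p2 q1 q2"
  unfolding unimodular_combination_def using assms by blast

lemma det_3_rows:
  "det (vector [vector [a1, a2, a3], vector [b1, b2, b3], vector [c1, c2, c3]] :: real^3^3)
   = a1*b2*c3 + a2*b3*c1 + a3*b1*c2 - a1*b3*c2 - a2*b1*c3 - a3*b2*c1"
  by (simp add: det_3)

lemma classC_unimodular_combination:
  assumes "unimodular_combination J p1 p2 q1 q2"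
  shows "classC q1 q2 J f \<longleftrightarrow> classC p1 p2 J f"
proof -
  obtain a b c d where ad: "a * d - b * c = 1"
    and q: "\<forall>t\<in>J. q1 t = a * p1 t + b * p2 t \<and> q2 t = c * p1 t + d * p2 t"
    using assms unfolding unimodular_combination_def by blast
  have "det (vector [vector [q1 t1, q1 t2, q1 t3], vector [q2 t1, q2 t2, q2 t3],
                     vector [f t1, f t2, f t3]] :: real^3^3)
      = (a * d - b * c) * det (vector [vector [p1 t1, p1 t2, p1 t3], vector [p2 t1, p2 t2, p2 t3],
                     vector [f t1, f t2, f t3]] :: real^3^3)"
    if "t1 \<in> J" "t2 \<in> J" "t3 \<in> J" for t1 t2 t3
  proof -
    have "q1 t1 = a * p1 t1 + b * p2 t1" "q1 t2 = a * p1 t2 + b * p2 t2" "q1 t3 = a * p1 t3 + b * p2 t3"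
      "q2 t1 = c * p1 t1 + d * p2 t1" "q2 t2 = c * p1 t2 + d * p2 t2" "q2 t3 = c * p1 t3 + d * p2 t3"
      using q that by auto
    then show ?thesis
      unfolding det_3_rows by (simp add: algebra_simps)
  qed
  then show ?thesis
    unfolding classC_def ad by simp
qed

lemma C1_with_deriv_linear_combination:
  assumes "C1_with_deriv J p1 p1'" "C1_with_deriv J p2 p2'" "\<forall>t\<in>J. q t = a * p1 t + b * p2 t"
  shows "C1_with_deriv J q (\<lambda>t. a * p1' t + b * p2' t)"
  unfolding C1_with_deriv_def
proof (intro conjI ballI)
  fix x assume x: "x \<in> J"
  have "((\<lambda>t. a * p1 t + b * p2 t) has_real_derivative a * p1' x + b * p2' x) (at x within J)"
    using assms(1,2) x unfolding C1_with_deriv_def by (auto intro!: derivative_eq_intros)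
  then show "(q has_real_derivative a * p1' x + b * p2' x) (at x within J)"
    by (rule has_field_derivative_transform_within[where d=1]) (use x assms(3) in auto)
next
  show "continuous_on J (\<lambda>t. a * p1' t + b * p2' t)"
    using assms(1,2) unfolding C1_with_deriv_def by (auto intro!: continuous_intros)
qed

lemma C1_wronskian_unimodular_combination:
  assumes "C1_with_deriv J p1 p1'" "C1_with_deriv J p2 p2'"
    and "unimodular_combination J p1 p2 q1 q2"
  obtains q1' q2' where "C1_with_deriv J q1 q1'" "C1_with_deriv J q2 q2'"
    "\<forall>x\<in>J. wronskian q1 q2 q1' q2' x = wronskian p1 p2 p1' p2' x"
proof -
  obtain a b c d where ad: "a * d - b * c = 1"
    and q1: "\<forall>t\<in>J. q1 t = a * p1 t + b * p2 t" and q2: "\<forall>t\<in>J. q2 t = c * p1 t + d * p2 t"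
    using assms(3) unfolding unimodular_combination_def by blast
  show thesis
  proof (rule that)
    show "C1_with_deriv J q1 (\<lambda>t. a * p1' t + b * p2' t)"
      by (rule C1_with_deriv_linear_combination[OF assms(1,2) q1])
    show "C1_with_deriv J q2 (\<lambda>t. c * p1' t + d * p2' t)"
      by (rule C1_with_deriv_linear_combination[OF assms(1,2) q2])
    have "wronskian q1 q2 (\<lambda>t. a * p1' t + b * p2' t) (\<lambda>t. c * p1' t + d * p2' t) x
        = (a * d - b * c) * wronskian p1 p2 p1' p2' x" if "x \<in> J" for x
      using q1 q2 that unfolding wronskian_def by (simp add: algebra_simps)
    then show "\<forall>x\<in>J. wronskian q1 q2 (\<lambda>t. a * p1' t + b * p2' t) (\<lambda>t. c * p1' t + d * p2' t) x
        = wronskian p1 p2 p1' p2' x"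
      unfolding ad by simp
  qed
qed

lemma integral_deriv_eq_diff_within:
  fixes g :: "real \<Rightarrow> real"
  assumes g: "\<forall>y\<in>S. (g has_real_derivative g' y) (at y within S)"
    and "{a..b} \<subseteq> S" "a \<le> b"
  shows "integral {a..b} (deriv g) = g b - g a"
proof -
  have "continuous_on S g"
    using g DERIV_continuous continuous_on_eq_continuous_within by blast
  then have "continuous_on {a..b} g"
    using assms(2) continuous_on_subset by blast
  moreover have "(g has_vector_derivative deriv g t) (at t)" if t: "t \<in> {a<..<b}" for t
  proof -
    have "t \<in> S" "{a<..<b} \<subseteq> S"
      using t assms(2) by auto
    then have "(g has_real_derivative g' t) (at t within {a<..<b})"
      using g DERIV_subset by blast
    then have "(g has_real_derivative g' t) (at t)"
      using at_within_open[OF t] by simp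
    then show ?thesis
      by (simp add: DERIV_imp_deriv has_real_derivative_iff_has_vector_derivative)
  qed
  ultimately have "(deriv g has_integral g b - g a) {a..b}"
    using fundamental_theorem_of_calculus_interior[OF assms(3)] by blast
  then show ?thesis
    by (rule integral_unique)
qed

lemma connected_nonvanishing_sign_cases:
  fixes f :: "'a::topological_space \<Rightarrow> real"
  assumes "connected S" "continuous_on S f" "\<forall>x\<in>S. f x \<noteq> 0"
  shows "(\<forall>x\<in>S. f x > 0) \<or> (\<forall>x\<in>S. f x < 0)"
proof (rule ccontr)
  assume "\<not> ?thesis"
  then obtain x y where "x \<in> S" "y \<in> S" "f x \<le> 0" "0 \<le> f y"
    by (meson not_less)
  moreover have "connected (f ` S)"
    by (rule connected_continuous_image[OF assms(2,1)])
  ultimately have "0 \<in> f ` S"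
    using connected_iff_interval[of "f ` S"] by (metis image_eqI)
  then show False
    using assms(3) by auto
qed

lemma abs_eq_sgn_mult_on_connected:
  fixes f :: "'a::topological_space \<Rightarrow> real"
  assumes "connected S" "continuous_on S f" "\<forall>x\<in>S. f x \<noteq> 0" "x0 \<in> S" "x \<in> S"
  shows "\<bar>f x\<bar> = sgn (f x0) * f x"
  using connected_nonvanishing_sign_cases[OF assms(1-3)] assms(4,5) by fastforce

lemma connected_half_open_ivl: "connected (half_open_ivl T x0)"
  unfolding is_interval_connected_1[symmetric] is_interval_1 half_open_ivl_def
  by (auto simp: ereal_less_le)

lemma atLeastAtMost_subset_half_open_ivl:
  "x \<in> half_open_ivl T x0 \<Longrightarrow> {T..x} \<subseteq> half_open_ivl T x0"
  unfolding half_open_ivl_def by (auto simp: ereal_less_le)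

lemma integral_deriv_quotient_half_open_ivl:
  assumes "C1_with_deriv (half_open_ivl T x0) p p'" "C1_with_deriv (half_open_ivl T x0) q q'"
    and "\<forall>y\<in>half_open_ivl T x0. q y \<noteq> 0" "x \<in> half_open_ivl T x0"
  shows "integral {T..x} (deriv (\<lambda>s. p s / q s)) = p x / q x - p T / q T"
proof (rule integral_deriv_eq_diff_within)
  show "\<forall>y\<in>half_open_ivl T x0. ((\<lambda>s. p s / q s) has_real_derivative
      (p' y * q y - p y * q' y) / (q y * q y)) (at y within half_open_ivl T x0)"
    using assms(1-3) unfolding C1_with_deriv_def by (auto intro!: DERIV_divide)
  show "{T..x} \<subseteq> half_open_ivl T x0"
    using assms(4) by (rule atLeastAtMost_subset_half_open_ivl)
  show "T \<le> x"
    using assms(4) unfolding half_open_ivl_def by simp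
qed

lemma unimodular_combination_integral_quotient:
  assumes "C1_with_deriv (half_open_ivl T x0) \<phi>1 \<phi>1'" "C1_with_deriv (half_open_ivl T x0) \<phi>2 \<phi>2'"
    and "\<forall>x\<in>half_open_ivl T x0. \<phi>1 x \<noteq> 0"
  shows "unimodular_combination (half_open_ivl T x0) \<phi>1 \<phi>2
           \<phi>1 (\<lambda>x. \<phi>1 x * integral {T..x} (deriv (\<lambda>s. \<phi>2 s / \<phi>1 s)))"
proof (rule unimodular_combinationI[where a = 1 and b = 0 and c = "- \<phi>2 T / \<phi>1 T" and d = 1])
  fix x assume x: "x \<in> half_open_ivl T x0"
  then show "\<phi>1 x * integral {T..x} (deriv (\<lambda>s. \<phi>2 s / \<phi>1 s)) = - \<phi>2 T / \<phi>1 T * \<phi>1 x + 1 * \<phi>2 x"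
    using assms(3) unfolding integral_deriv_quotient_half_open_ivl[OF assms(2,1,3) x]
    by (simp add: field_simps)
qed simp_all

text \<open>Here \<open>\<bar>\<phi>\<^sub>2\<bar> = \<sigma> \<phi>\<^sub>2\<close> for the constant sign \<open>\<sigma>\<close> of \<open>\<phi>\<^sub>2\<close>, and the
  determinant of the combination is \<open>\<sigma>\<^sup>2 = 1\<close>.\<close>
lemma unimodular_combination_abs_integral_quotient:
  assumes "ereal T < x0"
    and "C1_with_deriv (half_open_ivl T x0) \<phi>1 \<phi>1'" "C1_with_deriv (half_open_ivl T x0) \<phi>2 \<phi>2'"
    and nz: "\<forall>x\<in>half_open_ivl T x0. \<phi>2 x \<noteq> 0"
  shows "unimodular_combination (half_open_ivl T x0) \<phi>1 \<phi>2
           (\<lambda>x. \<bar>\<phi>2 x\<bar>) (\<lambda>x. - \<bar>\<phi>2 x\<bar> * integral {T..x} (deriv (\<lambda>s. \<phi>1 s / \<phi>2 s)))"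
proof -
  define \<sigma> where "\<sigma> = sgn (\<phi>2 T)"
  have T: "T \<in> half_open_ivl T x0"
    using assms(1) unfolding half_open_ivl_def by simp
  have "continuous_on (half_open_ivl T x0) \<phi>2"
    using assms(3) DERIV_continuous continuous_on_eq_continuous_within
    unfolding C1_with_deriv_def by blast
  then have abs_\<phi>2: "\<bar>\<phi>2 x\<bar> = \<sigma> * \<phi>2 x" if "x \<in> half_open_ivl T x0" for x
    unfolding \<sigma>_def by (rule abs_eq_sgn_mult_on_connected[OF connected_half_open_ivl _ nz T that])
  have "\<sigma> * \<sigma> = 1"
    using nz T unfolding \<sigma>_def by (auto simp: sgn_if)
  then show ?thesis
  proof (intro unimodular_combinationI[where a = 0 and b = \<sigma> and c = "- \<sigma>" and d = "\<sigma> * \<phi>1 T / \<phi>2 T"])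
    fix x assume x: "x \<in> half_open_ivl T x0"
    then show "\<bar>\<phi>2 x\<bar> = 0 * \<phi>1 x + \<sigma> * \<phi>2 x"
      by (simp add: abs_\<phi>2)
    show "- \<bar>\<phi>2 x\<bar> * integral {T..x} (deriv (\<lambda>s. \<phi>1 s / \<phi>2 s))
        = - \<sigma> * \<phi>1 x + \<sigma> * \<phi>1 T / \<phi>2 T * \<phi>2 x"
      using nz x unfolding integral_deriv_quotient_half_open_ivl[OF assms(2,3) nz x] abs_\<phi>2[OF x]
      by (simp add: field_simps)
  qed simp
qed

theorem lemma7p5:
  fixes T :: real and x0 :: ereal and \<phi>1 \<phi>2 \<phi>1' \<phi>2' :: "real \<Rightarrow> real"
  defines "I \<equiv> half_open_ivl T x0"
  assumes Tx0: "ereal T < x0"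
    and C1_1: "C1_with_deriv I \<phi>1 \<phi>1'"
    and C1_2: "C1_with_deriv I \<phi>2 \<phi>2'"
    and small: "\<phi>2 \<in> o[to_x0 x0](\<phi>1)"
    and pos1: "\<forall>x\<in>I. \<phi>1 x > 0"
    and nz2: "\<forall>x\<in>I. \<phi>2 x \<noteq> 0"
    and W: "\<forall>x\<in>I. wronskian \<phi>1 \<phi>2 \<phi>1' \<phi>2' x > 0"
  defines "\<psi>a1 \<equiv> \<phi>1"
    and "\<psi>a2 \<equiv> (\<lambda>x. \<phi>1 x * integral {T..x} (\<lambda>t. deriv (\<lambda>s. \<phi>2 s / \<phi>1 s) t))"
    and "\<psi>b1 \<equiv> (\<lambda>x. \<bar>\<phi>2 x\<bar>)"
    and "\<psi>b2 \<equiv> (\<lambda>x. - \<bar>\<phi>2 x\<bar> * integral {T..x} (\<lambda>t. deriv (\<lambda>s. \<phi>1 s / \<phi>2 s) t))"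
  shows "(\<exists>\<psi>a1' \<psi>a2'. C1_with_deriv I \<psi>a1 \<psi>a1' \<and> C1_with_deriv I \<psi>a2 \<psi>a2' \<and>
            (\<forall>x\<in>I. \<psi>a1 x > 0 \<and> wronskian \<psi>a1 \<psi>a2 \<psi>a1' \<psi>a2' x > 0))
       \<and> (\<exists>\<psi>b1' \<psi>b2'. C1_with_deriv I \<psi>b1 \<psi>b1' \<and> C1_with_deriv I \<psi>b2 \<psi>b2' \<and>
            (\<forall>x\<in>I. \<psi>b1 x > 0 \<and> wronskian \<psi>b1 \<psi>b2 \<psi>b1' \<psi>b2' x > 0))
       \<and> (\<forall>f. (classC \<phi>1 \<phi>2 I f \<longleftrightarrow> classC \<psi>a1 \<psi>a2 I f)
              \<and> (classC \<psi>a1 \<psi>a2 I f \<longleftrightarrow> classC \<psi>b1 \<psi>b2 I f))"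
proof -
  have unimodular_a: "unimodular_combination I \<phi>1 \<phi>2 \<psi>a1 \<psi>a2"
    using unimodular_combination_integral_quotient[of T x0 \<phi>1 \<phi>1' \<phi>2 \<phi>2'] C1_1 C1_2 pos1
    unfolding I_def \<psi>a1_def \<psi>a2_def by force
  have unimodular_b: "unimodular_combination I \<phi>1 \<phi>2 \<psi>b1 \<psi>b2"
    using unimodular_combination_abs_integral_quotient[OF Tx0] C1_1 C1_2 nz2
    unfolding I_def \<psi>b1_def \<psi>b2_def by blast
  obtain \<psi>a1' \<psi>a2' where "C1_with_deriv I \<psi>a1 \<psi>a1'" "C1_with_deriv I \<psi>a2 \<psi>a2'"
      "\<forall>x\<in>I. wronskian \<psi>a1 \<psi>a2 \<psi>a1' \<psi>a2' x = wronskian \<phi>1 \<phi>2 \<phi>1' \<phi>2' x"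
    using C1_wronskian_unimodular_combination[OF C1_1 C1_2 unimodular_a] .
  moreover obtain \<psi>b1' \<psi>b2' where "C1_with_deriv I \<psi>b1 \<psi>b1'" "C1_with_deriv I \<psi>b2 \<psi>b2'"
      "\<forall>x\<in>I. wronskian \<psi>b1 \<psi>b2 \<psi>b1' \<psi>b2' x = wronskian \<phi>1 \<phi>2 \<phi>1' \<phi>2' x"
    using C1_wronskian_unimodular_combination[OF C1_1 C1_2 unimodular_b] .
  ultimately show ?thesis
    using W pos1 nz2 classC_unimodular_combination[OF unimodular_a]
      classC_unimodular_combination[OF unimodular_b]
    unfolding \<psi>a1_def \<psi>b1_def by fastforce
qed

end
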